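(* For every real $x>1$, $$\mathcal L\left(\frac{1}{\left(x+\sqrt{x^2-1}\right)^2}\right)=\sum_{m=1}^{\infty}\mathcal L\left(\frac{1}{U_m(x)^2}\right),$$ where $U_m$ is the $m$-th Chebyshev polynomial of the second kind.
   Context: $\mathcal L$ is the Rogers dilogarithm: for real $z\le1$, $\mathcal L(z)=\mathrm{Li}_2(z)+\tfrac12\log|z|\log(1-z)$, where $\mathrm{Li}_2(z)=\sum_{m\ge1}z^m/m^2$. The Chebyshev polynomials of the second kind $U_m\in\mathbb Z[x]$ are determined by $U_m(\cos\theta)=\sin((m+1)\theta)/\sin\theta$. *)

theory Defs
  imports "HOL-Analysis.Analysis" "HOL-Computational_Algebra.Polynomial"
begin

definition Li2 :: "real \<Rightarrow> real" where
  "Li2 z = (\<Sum>m. z ^ (Suc m) / (real (Suc m))^2)"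

definition rogers_L :: "real \<Rightarrow> real" where
  "rogers_L z = Li2 z + 1/2 * ln \<bar>z\<bar> * ln (1 - z)"

fun chebU :: "nat \<Rightarrow> int poly" where
  "chebU 0 = 1"
| "chebU (Suc 0) = [:0, 2:]"
| "chebU (Suc (Suc m)) = [:0, 2:] * chebU (Suc m) - chebU m"

end

theory Submission
  imports Defs "HOL-Real_Asymp.Real_Asymp"
begin

(*
  Write x = (p + 1/p) / 2 with 0 < p < 1 and put r = p^2. Then U_n(x) p^n (1 - r) = 1 - r^(n+1),
  so 1 / U_n(x)^2 = r^n (1 - r)^2 / (1 - r^(n+1))^2. Abel's five-term relation
    L(x) + L(y) = L(xy) + L(x(1-y)/(1-xy)) + L(y(1-x)/(1-xy)),
  taken at x = s(1-r)/(1-sr) and y = r(1-sr)/(1-sr^2), writes s(1-r)^2/(1-sr)^2 as T(s) - T(sr)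
  with T(s) = L(s(1-r)/(1-sr)) - L(r(1-s)/(1-sr)); at s = r^n the series telescopes to
  T(r) - T(0) = L(r). The five-term relation follows by differentiating in x: all logarithms that
  occur are integer combinations of log x, log y, log(1-x), log(1-y), log(1-xy), and the derivative
  vanishes identically.
*)

lemma summable_Li2_series:
  assumes "\<bar>z\<bar> < 1" shows "summable (\<lambda>n. 1 / real n ^ 2 * z ^ n)"
proof (rule summable_comparison_test'[where g="\<lambda>n. \<bar>z\<bar> ^ n" and N=0])
  show "summable (\<lambda>n. \<bar>z\<bar> ^ n)" using assms by (simp add: summable_geometric)
  fix n :: nat
  have "norm (1 / real n ^ 2 * z ^ n) = 1 / real n ^ 2 * \<bar>z\<bar> ^ n"
    by (simp add: abs_mult power_abs)
  also have "\<dots> \<le> 1 * \<bar>z\<bar> ^ n"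
    by (rule mult_right_mono) (cases n, auto simp: field_simps)
  finally show "norm (1 / real n ^ 2 * z ^ n) \<le> \<bar>z\<bar> ^ n" by simp
qed

(* The n = 0 coefficient is 1 / 0 = 0, which accounts for the index shift against Li2_def. *)
lemma Li2_eq_power_series:
  assumes "\<bar>z\<bar> < 1" shows "Li2 z = (\<Sum>n. 1 / real n ^ 2 * z ^ n)"
proof -
  have "(\<lambda>n. 1 / real (Suc n) ^ 2 * z ^ Suc n) sums (\<Sum>n. 1 / real n ^ 2 * z ^ n)"
    using summable_Li2_series[OF assms] by (subst sums_Suc_iff) (simp add: summable_sums)
  then show ?thesis unfolding Li2_def by (simp add: sums_iff mult.commute)
qed

lemma Li2_has_derivative_series:
  assumes "\<bar>z\<bar> < 1" shows "(Li2 has_real_derivative (\<Sum>n. z ^ n / real (Suc n))) (at z)"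
proof -
  have diffs: "diffs (\<lambda>n. 1 / real n ^ 2) = (\<lambda>n. 1 / real (Suc n))"
    by (simp add: fun_eq_iff diffs_def power2_eq_square del: of_nat_Suc)
  have "((\<lambda>z. \<Sum>n. 1 / real n ^ 2 * z ^ n) has_real_derivative
          (\<Sum>n. diffs (\<lambda>n. 1 / real n ^ 2) n * z ^ n)) (at z)"
    by (rule termdiffs_strong'[where K=1]) (use assms summable_Li2_series in auto)
  then have "((\<lambda>z. \<Sum>n. 1 / real n ^ 2 * z ^ n) has_real_derivative
               (\<Sum>n. z ^ n / real (Suc n))) (at z)"
    by (simp add: diffs)
  then show ?thesis
    by (rule has_field_derivative_transform_within_open[where S="{-1<..<1}"])
       (use assms Li2_eq_power_series in auto)
qed

lemma Li2_has_derivative: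
  assumes "\<bar>z\<bar> < 1" "z \<noteq> 0" shows "(Li2 has_real_derivative - ln (1 - z) / z) (at z)"
proof -
  have "(\<lambda>n. - ((- (-z)) ^ n) / real n) sums ln (1 + -z)"
    by (rule ln_series') (use assms in auto)
  then have "(\<lambda>n. - (z ^ Suc n) / real (Suc n)) sums ln (1 - z)"
    by (subst sums_Suc_iff) simp
  then have "(\<lambda>n. (- 1 / z) * (- (z ^ Suc n) / real (Suc n))) sums (- 1 / z * ln (1 - z))"
    by (rule sums_mult)
  then have "(\<lambda>n. z ^ n / real (Suc n)) sums (- ln (1 - z) / z)"
    using assms(2) by (simp add: field_simps)
  then show ?thesis using Li2_has_derivative_series[OF assms(1)] by (simp add: sums_iff)
qed

lemma rogers_L_eq: "0 \<le> z \<Longrightarrow> rogers_L z = Li2 z + 1/2 * ln z * ln (1 - z)"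
  unfolding rogers_L_def by simp

lemma rogers_L_0 [simp]: "rogers_L 0 = 0"
  by (simp add: rogers_L_def Li2_def)

lemma rogers_L_has_derivative:
  assumes "0 < z" "z < 1"
  shows "(rogers_L has_real_derivative - (ln (1 - z) / z + ln z / (1 - z)) / 2) (at z)"
proof -
  have "((\<lambda>z. Li2 z + 1/2 * ln z * ln (1 - z)) has_real_derivative
          - (ln (1 - z) / z + ln z / (1 - z)) / 2) (at z)"
    using assms by (auto intro!: derivative_eq_intros Li2_has_derivative simp: field_simps)
  then show ?thesis
    by (rule has_field_derivative_transform_within_open[where S="{0<..}"])
       (use assms rogers_L_eq in auto)
qed

lemma continuous_on_rogers_L: "continuous_on {0..<1} rogers_L"
  unfolding continuous_on_eq_continuous_within
proof (intro ballI)
  fix z :: real assume z: "z \<in> {0..<1}"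
  show "continuous (at z within {0..<1}) rogers_L"
  proof (cases "z = 0")
    case False
    with z have "isCont rogers_L z"
      using rogers_L_has_derivative[of z] by (auto intro: DERIV_isCont)
    then show ?thesis by (rule continuous_at_imp_continuous_at_within)
  next
    case True
    have "isCont Li2 0" using Li2_has_derivative_series[of 0] by (auto intro: DERIV_isCont)
    then have "(Li2 \<longlongrightarrow> 0) (at_right 0)"
      by (simp add: isCont_def filterlim_at_split Li2_def)
    moreover have "((\<lambda>z::real. ln z * ln (1 - z)) \<longlongrightarrow> 0) (at_right 0)" by real_asymp
    ultimately have "((\<lambda>z. Li2 z + 1/2 * (ln z * ln (1 - z))) \<longlongrightarrow> 0 + 1/2 * 0) (at_right 0)"
      by (intro tendsto_intros)
    then have "((\<lambda>z. Li2 z + 1/2 * (ln z * ln (1 - z))) \<longlongrightarrow> 0) (at_right 0)" by simp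
    then have "(rogers_L \<longlongrightarrow> 0) (at_right 0)"
      by (rule Lim_transform_eventually)
         (rule eventually_mono[OF eventually_at_right_less], simp add: rogers_L_eq)
    moreover have "at (0::real) within {0..<1} = at_right 0"
      by (rule at_within_nhd[where S="{-1<..<1}"]) auto
    ultimately show ?thesis using True by (simp add: continuous_within)
  qed
qed

lemma rogers_L_comp_has_derivative:
  assumes "(g has_real_derivative g') (at t)" "0 < g t" "g t < 1"
    and "g' = g t * D" "g' = - (1 - g t) * E"
  shows "((\<lambda>t. rogers_L (g t)) has_real_derivative - (ln (1 - g t) * D - ln (g t) * E) / 2) (at t)"
proof -
  have "((\<lambda>t. rogers_L (g t)) has_real_derivative
          - (ln (1 - g t) / g t + ln (g t) / (1 - g t)) / 2 * g') (at t)"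
    by (rule DERIV_chain2[OF rogers_L_has_derivative assms(1)]) (use assms in auto)
  moreover have "- (ln (1 - g t) / g t + ln (g t) / (1 - g t)) / 2 * g'
      = - (ln (1 - g t) * D - ln (g t) * E) / 2"
  proof -
    have "ln (1 - g t) / g t * g' = ln (1 - g t) * D" using assms(2,4) by simp
    moreover have "ln (g t) / (1 - g t) * g' = - ln (g t) * E"
      using assms(3) by (simp add: assms(5) field_simps)
    ultimately show ?thesis by (simp add: algebra_simps)
  qed
  ultimately show ?thesis by simp
qed

lemma five_term_args_in_unit_interval:
  fixes x y :: real
  assumes x: "0 \<le> x" "x < 1" and y: "0 \<le> y" "y < 1"
  shows "x * y \<in> {0..<1}" and "x * (1 - y) / (1 - x * y) \<in> {0..<1}"
    and "y * (1 - x) / (1 - x * y) \<in> {0..<1}"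
proof -
  have xy: "0 \<le> x * y" "x * y < 1" using x y mult_left_le[of y x] by auto
  then show "x * y \<in> {0..<1}" by simp
  have "1 - x * (1 - y) / (1 - x * y) = (1 - x) / (1 - x * y)"
       "1 - y * (1 - x) / (1 - x * y) = (1 - y) / (1 - x * y)"
    using xy by (simp_all add: field_simps)
  moreover have "0 < (1 - x) / (1 - x * y)" "0 < (1 - y) / (1 - x * y)" using x y xy by simp_all
  moreover have "0 \<le> x * (1 - y) / (1 - x * y)" "0 \<le> y * (1 - x) / (1 - x * y)"
    using x y xy by simp_all
  ultimately show "x * (1 - y) / (1 - x * y) \<in> {0..<1}" "y * (1 - x) / (1 - x * y) \<in> {0..<1}"
    unfolding atLeastLessThan_iff by linarith+
qed

lemma ln_five_term_args:
  fixes t y :: real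
  assumes t: "0 < t" "t < 1" and y: "0 < y" "y < 1"
  shows "ln (t * (1 - y) / (1 - t * y)) = ln t + ln (1 - y) - ln (1 - t * y)"
    and "ln (1 - t * (1 - y) / (1 - t * y)) = ln (1 - t) - ln (1 - t * y)"
    and "ln (y * (1 - t) / (1 - t * y)) = ln y + ln (1 - t) - ln (1 - t * y)"
    and "ln (1 - y * (1 - t) / (1 - t * y)) = ln (1 - y) - ln (1 - t * y)"
proof -
  have ty: "t * y < 1" using t y mult_strict_mono[of t 1 y 1] by simp
  have "1 - t * (1 - y) / (1 - t * y) = (1 - t) / (1 - t * y)"
       "1 - y * (1 - t) / (1 - t * y) = (1 - y) / (1 - t * y)"
    using ty by (simp_all add: field_simps)
  with t y ty show "ln (t * (1 - y) / (1 - t * y)) = ln t + ln (1 - y) - ln (1 - t * y)"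
    "ln (1 - t * (1 - y) / (1 - t * y)) = ln (1 - t) - ln (1 - t * y)"
    "ln (y * (1 - t) / (1 - t * y)) = ln y + ln (1 - t) - ln (1 - t * y)"
    "ln (1 - y * (1 - t) / (1 - t * y)) = ln (1 - y) - ln (1 - t * y)"
    by (simp_all add: ln_mult ln_div)
qed

lemma five_term_quotients_has_derivative:
  fixes t y :: real
  assumes nz: "t \<noteq> 0" "1 - t \<noteq> 0" "1 - t * y \<noteq> 0"
  shows "((\<lambda>t. t * (1 - y) / (1 - t * y)) has_real_derivative
           t * (1 - y) / (1 - t * y) * (1 / t + y / (1 - t * y))) (at t)"
    and "t * (1 - y) / (1 - t * y) * (1 / t + y / (1 - t * y))
           = - (1 - t * (1 - y) / (1 - t * y)) * (- 1 / (1 - t) + y / (1 - t * y))"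
    and "((\<lambda>t. y * (1 - t) / (1 - t * y)) has_real_derivative
           y * (1 - t) / (1 - t * y) * (- 1 / (1 - t) + y / (1 - t * y))) (at t)"
    and "y * (1 - t) / (1 - t * y) * (- 1 / (1 - t) + y / (1 - t * y))
           = - (1 - y * (1 - t) / (1 - t * y)) * (y / (1 - t * y))"
proof -
  have "((\<lambda>t. t * (1 - y) / (1 - t * y)) has_real_derivative (1 - y) / (1 - t * y)^2) (at t)"
       "((\<lambda>t. y * (1 - t) / (1 - t * y)) has_real_derivative - y * (1 - y) / (1 - t * y)^2) (at t)"
    using nz by (auto intro!: derivative_eq_intros simp: power2_eq_square field_simps)
  moreover have "(1 - y) / (1 - t * y)^2 = t * (1 - y) / (1 - t * y) * (1 / t + y / (1 - t * y))"
    "- y * (1 - y) / (1 - t * y)^2 = y * (1 - t) / (1 - t * y) * (- 1 / (1 - t) + y / (1 - t * y))"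
    using nz by (simp_all add: divide_simps) (simp_all add: algebra_simps power2_eq_square)
  ultimately show "((\<lambda>t. t * (1 - y) / (1 - t * y)) has_real_derivative
           t * (1 - y) / (1 - t * y) * (1 / t + y / (1 - t * y))) (at t)"
    "((\<lambda>t. y * (1 - t) / (1 - t * y)) has_real_derivative
           y * (1 - t) / (1 - t * y) * (- 1 / (1 - t) + y / (1 - t * y))) (at t)"
    by simp_all
  show "t * (1 - y) / (1 - t * y) * (1 / t + y / (1 - t * y))
           = - (1 - t * (1 - y) / (1 - t * y)) * (- 1 / (1 - t) + y / (1 - t * y))"
    "y * (1 - t) / (1 - t * y) * (- 1 / (1 - t) + y / (1 - t * y))
           = - (1 - y * (1 - t) / (1 - t * y)) * (y / (1 - t * y))"
    using nz by (simp_all add: divide_simps) (simp_all add: algebra_simps)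
qed

lemma rogers_L_five_term_has_derivative_0:
  fixes t y :: real
  assumes t: "0 < t" "t < 1" and y: "0 < y" "y < 1"
  shows "((\<lambda>t. rogers_L t - rogers_L (t * y) - rogers_L (t * (1 - y) / (1 - t * y))
                - rogers_L (y * (1 - t) / (1 - t * y))) has_real_derivative 0) (at t)"
proof -
  have ty: "0 < t * y" "t * y < 1" using t y mult_strict_mono[of t 1 y 1] by simp_all
  then have nz: "t \<noteq> 0" "1 - t \<noteq> 0" "1 - t * y \<noteq> 0" using t by simp_all
  note quot = five_term_quotients_has_derivative[OF nz]
  have "t * (1 - y) / (1 - t * y) \<in> {0<..<1}" "y * (1 - t) / (1 - t * y) \<in> {0<..<1}"
    using five_term_args_in_unit_interval[of t y] t y ty by simp_all
  then have quot_bounds: "0 < t * (1 - y) / (1 - t * y)" "t * (1 - y) / (1 - t * y) < 1"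
    "0 < y * (1 - t) / (1 - t * y)" "y * (1 - t) / (1 - t * y) < 1"
    by simp_all
  define X Y A B C
    where log_defs: "X = ln t" "Y = ln y" "A = ln (1 - t)" "B = ln (1 - y)" "C = ln (1 - t * y)"
  define dX dA dC where dlog_defs: "dX = 1 / t" "dA = - 1 / (1 - t)" "dC = - y / (1 - t * y)"
  have "((\<lambda>t. rogers_L t) has_real_derivative - (A * dX - X * dA) / 2) (at t)"
    by (rule DERIV_cong[OF rogers_L_has_derivative[OF t]])
       (use t in \<open>simp add: log_defs dlog_defs field_simps\<close>)
  moreover have "((\<lambda>t. rogers_L (t * y)) has_real_derivative - (C * dX - (X + Y) * dC) / 2) (at t)"
    by (rule DERIV_cong[OF rogers_L_comp_has_derivative[where g="\<lambda>t. t * y" and D=dX and E=dC]])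
       (use t ty in \<open>auto intro!: derivative_eq_intros
                       simp: ln_mult log_defs dlog_defs field_simps\<close>)
  moreover have "((\<lambda>t. rogers_L (t * (1 - y) / (1 - t * y))) has_real_derivative
      - ((A - C) * (dX - dC) - (X + B - C) * (dA - dC)) / 2) (at t)"
    by (rule DERIV_cong[OF rogers_L_comp_has_derivative[OF quot(1) quot_bounds(1,2) refl quot(2)]])
       (simp add: ln_five_term_args[OF t y] log_defs dlog_defs)
  moreover have "((\<lambda>t. rogers_L (y * (1 - t) / (1 - t * y))) has_real_derivative
      - ((B - C) * (dA - dC) - (Y + A - C) * (- dC)) / 2) (at t)"
    by (rule DERIV_cong[OF rogers_L_comp_has_derivative[OF quot(3) quot_bounds(3,4) refl quot(4)]])
       (simp add: ln_five_term_args[OF t y] log_defs dlog_defs)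
  ultimately have "((\<lambda>t. rogers_L t - rogers_L (t * y) - rogers_L (t * (1 - y) / (1 - t * y))
                - rogers_L (y * (1 - t) / (1 - t * y))) has_real_derivative
      - (A * dX - X * dA) / 2 - - (C * dX - (X + Y) * dC) / 2
      - - ((A - C) * (dX - dC) - (X + B - C) * (dA - dC)) / 2
      - - ((B - C) * (dA - dC) - (Y + A - C) * (- dC)) / 2) (at t)"
    by (intro derivative_intros)
  then show ?thesis by (rule DERIV_cong) (simp add: field_simps)
qed

lemma rogers_L_five_term:
  fixes x y :: real
  assumes x: "0 \<le> x" "x < 1" and y: "0 \<le> y" "y < 1"
  shows "rogers_L x + rogers_L y
           = rogers_L (x * y) + rogers_L (x * (1 - y) / (1 - x * y))
             + rogers_L (y * (1 - x) / (1 - x * y))"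
proof (cases "x = 0 \<or> y = 0")
  case True
  then show ?thesis by auto
next
  case False
  with x y have x0: "0 < x" and y0: "0 < y" by auto
  define F where "F t = rogers_L t - rogers_L (t * y) - rogers_L (t * (1 - y) / (1 - t * y))
                          - rogers_L (y * (1 - t) / (1 - t * y))" for t
  have args: "t * y \<in> {0..<1}" "t * (1 - y) / (1 - t * y) \<in> {0..<1}"
      "y * (1 - t) / (1 - t * y) \<in> {0..<1}"
    if "t \<in> {0..x}" for t
    using five_term_args_in_unit_interval[of t y] that x y by auto
  then have "1 - t * y \<noteq> 0" if "t \<in> {0..x}" for t
    using that by fastforce
  with args have "continuous_on {0..x} F"
    unfolding F_def using x
    by (intro continuous_intros continuous_on_compose2[OF continuous_on_rogers_L]) auto
  moreover have "DERIV F t :> 0" if "0 < t" "t < x" for t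
    unfolding F_def[abs_def] using rogers_L_five_term_has_derivative_0[of t y] that x y0 y by simp
  ultimately have "F x = F 0" using x by (intro DERIV_isconst2[OF x0]) auto
  then show ?thesis by (simp add: F_def)
qed

definition rogers_L_telescope :: "real \<Rightarrow> real \<Rightarrow> real" where
  "rogers_L_telescope r s
     = rogers_L (s * (1 - r) / (1 - s * r)) - rogers_L (r * (1 - s) / (1 - s * r))"

lemma rogers_L_telescope_step:
  fixes r s :: real
  assumes r: "0 \<le> r" "r < 1" and s: "0 \<le> s" "s < 1"
  shows "rogers_L (s * (1 - r)^2 / (1 - s * r)^2)
           = rogers_L_telescope r s - rogers_L_telescope r (s * r)"
proof -
  note args = five_term_args_in_unit_interval[OF s r]
  define x where "x = s * (1 - r) / (1 - s * r)"
  define y where "y = r * (1 - s * r) / (1 - s * r * r)"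
  have sr: "0 \<le> s * r" "s * r < 1" "s * r * r < 1"
    using args(1) five_term_args_in_unit_interval(1)[of "s * r" r] r by auto
  have x: "0 \<le> x" "x < 1" using args(2) unfolding x_def atLeastLessThan_iff by blast+
  have y: "0 \<le> y" "y < 1"
    using five_term_args_in_unit_interval(3)[of "s * r" r] r sr
    unfolding y_def atLeastLessThan_iff by blast+
  have one_minus: "1 - x = (1 - s) / (1 - s * r)" "1 - y = (1 - r) / (1 - s * r * r)"
    using sr by (simp_all add: x_def y_def field_simps)
  have prod: "x * y = s * r * (1 - r) / (1 - s * r * r)"
    using sr by (simp add: x_def y_def divide_simps)
  have one_minus_prod: "1 - x * y = (1 - s * r) / (1 - s * r * r)"
    unfolding prod using sr by (simp add: field_simps)
  have quot_x: "x * (1 - y) / (1 - x * y) = s * (1 - r)^2 / (1 - s * r)^2"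
    unfolding one_minus_prod one_minus(2) unfolding x_def
    using sr by (simp add: divide_simps power2_eq_square)
  have quot_y: "y * (1 - x) / (1 - x * y) = r * (1 - s) / (1 - s * r)"
    unfolding one_minus_prod one_minus(1) unfolding y_def
    using sr by (simp add: divide_simps)
  show ?thesis
    using rogers_L_five_term[OF x y] unfolding quot_x quot_y unfolding prod
    unfolding rogers_L_telescope_def x_def y_def by linarith
qed

lemma rogers_L_geometric_sums:
  fixes r :: real
  assumes r: "0 < r" "r < 1"
  shows "(\<lambda>m. rogers_L (r ^ Suc m * (1 - r)^2 / (1 - r ^ Suc (Suc m))^2)) sums rogers_L r"
proof -
  have pow: "0 \<le> r ^ Suc m" "r ^ Suc m < 1" for m
    using r by (simp_all add: power_less_one_iff del: power_Suc)
  have "(\<lambda>m. rogers_L_telescope r (r ^ Suc m)) \<longlonglongrightarrow> rogers_L_telescope r 0"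
  proof -
    have lim: "(\<lambda>m. r ^ Suc m) \<longlonglongrightarrow> 0"
      using LIMSEQ_Suc[OF LIMSEQ_power_zero[of r]] r by simp
    have cont: "continuous_on {0..<1} (rogers_L_telescope r)"
    proof -
      have args: "s * r \<in> {0..<1}" "s * (1 - r) / (1 - s * r) \<in> {0..<1}"
          "r * (1 - s) / (1 - s * r) \<in> {0..<1}"
        if "s \<in> {0..<1}" for s
        using five_term_args_in_unit_interval[of s r] that r by auto
      then have "1 - s * r \<noteq> 0" if "s \<in> {0..<1}" for s
        using that by fastforce
      with args show ?thesis unfolding rogers_L_telescope_def
        by (intro continuous_intros continuous_on_compose2[OF continuous_on_rogers_L]) auto
    qed
    show ?thesis
      by (rule continuous_on_tendsto_compose[OF cont lim]) (use pow in auto)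
  qed
  then have "(\<lambda>m. rogers_L_telescope r (r ^ Suc m) - rogers_L_telescope r (r ^ Suc (Suc m)))
               sums (rogers_L_telescope r (r ^ Suc 0) - rogers_L_telescope r 0)"
    by (rule telescope_sums')
  moreover have "rogers_L_telescope r (r ^ Suc 0) - rogers_L_telescope r 0 = rogers_L r"
    by (simp add: rogers_L_telescope_def)
  moreover have "rogers_L (r ^ Suc m * (1 - r)^2 / (1 - r ^ Suc (Suc m))^2)
      = rogers_L_telescope r (r ^ Suc m) - rogers_L_telescope r (r ^ Suc (Suc m))" for m
    using rogers_L_telescope_step[OF less_imp_le[OF r(1)] r(2) pow, unfolded power_Suc2[symmetric]] .
  ultimately show ?thesis by simp
qed

lemma map_poly_of_int_diff:
  "map_poly (of_int :: int \<Rightarrow> 'a::ring_1) (p - q) = map_poly of_int p - map_poly of_int q"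
  by (rule poly_eqI) (simp add: coeff_map_poly)

lemma poly_chebU_Suc_Suc:
  "poly (map_poly (of_int :: int \<Rightarrow> 'a::comm_ring_1) (chebU (Suc (Suc m)))) x
     = 2 * x * poly (map_poly of_int (chebU (Suc m))) x - poly (map_poly of_int (chebU m)) x"
  by (simp add: map_poly_of_int_diff map_poly_pCons map_poly_smult)

lemma poly_chebU_joukowski:
  fixes p :: "'a::field_char_0"
  assumes "p \<noteq> 0"
  shows "poly (map_poly of_int (chebU n)) ((p + 1 / p) / 2) * p ^ n * (1 - p^2) = 1 - (p^2) ^ Suc n"
proof (induction n rule: chebU.induct)
  case 1
  then show ?case by simp
next
  case 2
  then show ?case using assms by (simp add: map_poly_pCons field_simps power2_eq_square)
next
  case (3 m)
  let ?U = "\<lambda>k. poly (map_poly (of_int :: int \<Rightarrow> 'a) (chebU k)) ((p + 1 / p) / 2)"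
  have "?U (Suc (Suc m)) * p ^ Suc (Suc m) * (1 - p^2)
      = (p^2 + 1) * (?U (Suc m) * p ^ Suc m * (1 - p^2)) - p^2 * (?U m * p ^ m * (1 - p^2))"
    unfolding poly_chebU_Suc_Suc using assms by (simp add: field_simps power2_eq_square)
  also have "\<dots> = 1 - (p^2) ^ Suc (Suc (Suc m))"
    unfolding "3" by (simp add: algebra_simps)
  finally show ?case .
qed

lemma inverse_square_poly_chebU_joukowski:
  fixes p :: real
  assumes "0 < p" "p < 1"
  shows "1 / poly (map_poly of_int (chebU n)) ((p + 1 / p) / 2) ^ 2
           = (p^2) ^ n * (1 - p^2)^2 / (1 - (p^2) ^ Suc n)^2"
proof -
  let ?U = "poly (map_poly of_int (chebU n)) ((p + 1 / p) / 2)"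
  have "p^2 < 1" "(p^2) ^ Suc n < 1"
    using assms by (simp_all add: power_less_one_iff del: power_Suc)
  then have "p ^ n * (1 - p^2) \<noteq> 0"
    using assms by simp
  moreover have "?U * (p ^ n * (1 - p^2)) = 1 - (p^2) ^ Suc n"
    using poly_chebU_joukowski[of p n] assms by (simp add: mult.assoc)
  ultimately have "?U = (1 - (p^2) ^ Suc n) / (p ^ n * (1 - p^2))"
    by (simp add: eq_divide_eq)
  then have "1 / ?U ^ 2 = (p ^ n * (1 - p^2))^2 / (1 - (p^2) ^ Suc n)^2"
    by (simp add: power_divide)
  then show ?thesis by (simp add: power_mult_distrib power_mult[symmetric] mult.commute)
qed

theorem corollary4:
  fixes x :: real
  assumes "x > 1"
  shows "(\<lambda>m. rogers_L (1 / (poly (map_poly of_int (chebU (Suc m))) x)^2))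
           sums rogers_L (1 / (x + sqrt (x^2 - 1))^2)"
proof -
  define p where "p = 1 / (x + sqrt (x^2 - 1))"
  have "0 \<le> sqrt (x^2 - 1)" using assms by simp
  then have "x + sqrt (x^2 - 1) > 1" using assms by linarith
  then have p: "0 < p" "p < 1" by (simp_all add: p_def)
  have "sqrt (x^2 - 1) ^ 2 = x^2 - 1" using assms by simp
  then have p_eq: "p = x - sqrt (x^2 - 1)"
    using p by (simp add: p_def field_simps power2_eq_square)
  have "1 / p = x + sqrt (x^2 - 1)" by (simp add: p_def)
  then have x: "x = (p + 1 / p) / 2" unfolding p_eq by simp
  have "1 / (x + sqrt (x^2 - 1))^2 = p^2" by (simp add: p_def power_one_over)
  with rogers_L_geometric_sums[of "p^2"] p show ?thesis
    unfolding x inverse_square_poly_chebU_joukowski[OF p]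
    by (simp add: power_less_one_iff del: power_Suc)
qed

end
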